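(* Let $F\subsetneq K$ be fields of characteristic $0$, with $F$ a proper nonempty subfield of $K$. Let $p(x)=\sum_{k=0}^{n}a_k x^k\in K[x]$ be non-constant with $0\neq a_n\in F$. Let $q\in K[x,y]\setminus F[x,y]$, written $q(x,y)=\sum_{j=0}^{m}q_j(x,y)$ with each $q_j$ homogeneous of degree $j$ and $0\neq q_m\in F[x,y]$. If $q_j\notin F[x,y]$ for some $j\geq 1$, then $p(q(x,y))\notin F[x,y]$ and $D_F(p\circ q)=D_F(q)$.
   Context: $F[x,y]$ denotes polynomials in $x,y$ with all coefficients in $F$. For $h\in K[x,y]$ written $h=\sum_{k=0}^{N}h_k$ with $h_k$ homogeneous of degree $k$ and $h_N\neq 0$: if $h\notin F[x,y]$, $D_F(h)=N-\max\{k: h_k\notin F[x,y]\}$; if $h\in F[x,y]$, $D_F(h)=N$. *)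

theory Defs
  imports "HOL-Computational_Algebra.Polynomial"
begin

text \<open>Bivariate polynomials K[x,y] are represented as 'a poly poly:
 polynomials in y whose coefficients are polynomials in x.
 The coefficient of x^i y^j of h is bcoeff h i j.\<close>

definition bcoeff :: "'a::zero poly poly \<Rightarrow> nat \<Rightarrow> nat \<Rightarrow> 'a" where
  "bcoeff h i j = coeff (coeff h j) i"

definition is_subfield :: "'a::field set \<Rightarrow> bool" where
  "is_subfield F \<longleftrightarrow> 0 \<in> F \<and> 1 \<in> F \<and>
     (\<forall>a\<in>F. \<forall>b\<in>F. a + b \<in> F \<and> a - b \<in> F \<and> a * b \<in> F) \<and>
     (\<forall>a\<in>F. inverse a \<in> F)"

definition in_Fxy :: "'a::zero set \<Rightarrow> 'a poly poly \<Rightarrow> bool" where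
  "in_Fxy F h \<longleftrightarrow> (\<forall>i j. bcoeff h i j \<in> F)"

definition hom_in_Fxy :: "'a::zero set \<Rightarrow> 'a poly poly \<Rightarrow> nat \<Rightarrow> bool" where
  "hom_in_Fxy F h k \<longleftrightarrow> (\<forall>i j. i + j = k \<longrightarrow> bcoeff h i j \<in> F)"

text \<open>total degree N (for h \<noteq> 0)\<close>
definition tdeg :: "'a::zero poly poly \<Rightarrow> nat" where
  "tdeg h = Max {i + j | i j. bcoeff h i j \<noteq> 0}"

definition D_F :: "'a::zero set \<Rightarrow> 'a poly poly \<Rightarrow> nat" where
  "D_F F h = (if in_Fxy F h then tdeg h
              else tdeg h - Max {k. \<not> hom_in_Fxy F h k})"

definition comp_biv :: "'a::comm_semiring_1 poly \<Rightarrow> 'a poly poly \<Rightarrow> 'a poly poly" where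
  "comp_biv p q = poly (map_poly (\<lambda>c. [:[:c:]:]) p) q"

end

theory Submission
  imports Defs
begin

text \<open>
  Send \<open>h(x,y)\<close> to \<open>h(t, y t) \<in> K[y][t]\<close>: the coefficient of \<open>t^k\<close> is \<open>h\<^sub>k(1,y)\<close>, which lies
  in \<open>S = F[y]\<close> iff \<open>h\<^sub>k \<in> F[x,y]\<close>. Let \<open>Q\<close> be the image of \<open>q\<close>, \<open>m = deg Q\<close>, and \<open>r\<close> the
  largest index with \<open>Q\<^sub>r \<notin> S\<close>, so that \<open>1 \<le> r < m\<close>; the image of \<open>p \<circ> q\<close> is \<open>p(Q)\<close>.
  Splitting \<open>Q = Q\<^sub>h\<^sub>i + Q\<^sub>l\<^sub>o\<close> with \<open>Q\<^sub>h\<^sub>i \<in> S[t]\<close> and \<open>deg Q\<^sub>l\<^sub>o \<le> r\<close>, the difference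
  \<open>Q^n - Q\<^sub>h\<^sub>i^n\<close> has degree at most \<open>(n-1)m + r\<close>, with coefficient \<open>n lc(Q)^(n-1) Q\<^sub>r\<close> there,
  while the lower powers of \<open>Q\<close> in \<open>p(Q)\<close> have degree at most \<open>(n-1)m < (n-1)m + r\<close>.
  So all coefficients of \<open>p(Q)\<close> above \<open>(n-1)m + r\<close> lie in \<open>S\<close>, and the one at \<open>(n-1)m + r\<close>
  does not, because \<open>F[y]\<close> is closed under exact division by its nonzero elements and
  \<open>n \<noteq> 0\<close> in characteristic 0. Hence \<open>D\<^sub>F(p \<circ> q) = nm - ((n-1)m + r) = m - r = D\<^sub>F(q)\<close>.
\<close>

definition is_subring :: "'a::comm_ring_1 set \<Rightarrow> bool" where
  "is_subring S \<longleftrightarrow> 0 \<in> S \<and> 1 \<in> S \<and> (\<forall>a\<in>S. \<forall>b\<in>S. a + b \<in> S \<and> a - b \<in> S \<and> a * b \<in> S)"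

definition quotient_closed :: "'a::comm_ring_1 set \<Rightarrow> bool" where
  "quotient_closed S \<longleftrightarrow> (\<forall>s\<in>S. \<forall>a. s \<noteq> 0 \<longrightarrow> s * a \<in> S \<longrightarrow> a \<in> S)"

definition polys_over :: "'a::zero set \<Rightarrow> 'a poly set" where
  "polys_over S = {p. \<forall>i. coeff p i \<in> S}"

lemma is_subring_sum: "is_subring S \<Longrightarrow> (\<And>x. x \<in> A \<Longrightarrow> f x \<in> S) \<Longrightarrow> sum f A \<in> S"
  by (induction A rule: infinite_finite_induct) (auto simp: is_subring_def)

lemma is_subring_power: "is_subring S \<Longrightarrow> a \<in> S \<Longrightarrow> a ^ n \<in> S"
  by (induction n) (auto simp: is_subring_def)

lemma is_subring_of_nat: "is_subring S \<Longrightarrow> of_nat n \<in> S"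
  by (induction n) (auto simp: is_subring_def)

lemma is_subring_polys_over: "is_subring S \<Longrightarrow> is_subring (polys_over S)"
  unfolding is_subring_def polys_over_def
  by (auto simp: coeff_1 coeff_mult intro!: is_subring_sum[unfolded is_subring_def])

lemma is_subfield_imp_is_subring: "is_subfield F \<Longrightarrow> is_subring F"
  by (simp add: is_subfield_def is_subring_def)

lemma is_subfield_imp_quotient_closed:
  assumes "is_subfield (F :: 'a::field set)"
  shows "quotient_closed F"
  unfolding quotient_closed_def
proof (intro ballI allI impI)
  fix s a assume "s \<in> F" "s \<noteq> 0" "s * a \<in> F"
  then have "inverse s * (s * a) \<in> F" using assms by (simp add: is_subfield_def)
  then show "a \<in> F" using \<open>s \<noteq> 0\<close> by (simp add: field_simps)
qed

lemma coeff_mult_at_degree_bounds: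
  fixes p q :: "'a::comm_semiring_0 poly"
  assumes "degree p \<le> a" "degree q \<le> b"
  shows "coeff (p * q) (a + b) = coeff p a * coeff q b"
proof (cases "degree p = a \<and> degree q = b")
  case True then show ?thesis using coeff_mult_degree_sum by metis
next
  case False
  then have "degree (p * q) < a + b" using assms degree_mult_le[of p q] by linarith
  moreover have "coeff p a * coeff q b = 0" using False assms
    by (metis coeff_eq_0 le_neq_implies_less mult_zero_left mult_zero_right)
  ultimately show ?thesis by (simp add: coeff_eq_0)
qed

lemma degree_power_le_mult: "degree p \<le> m \<Longrightarrow> degree (p ^ k) \<le> k * m"
  using degree_power_le[of p k] by (metis mult.commute mult_le_mono1 order_trans)

lemma coeff_power_at_degree_bound:
  fixes p :: "'a::comm_semiring_1 poly"
  assumes "degree p \<le> m"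
  shows "coeff (p ^ k) (k * m) = coeff p m ^ k"
proof (induction k)
  case (Suc k)
  then show ?case
    using coeff_mult_at_degree_bounds[OF assms degree_power_le_mult[OF assms]] by simp
qed simp

lemma polys_over_split:
  fixes f :: "'a::ab_group_add poly"
  assumes "0 \<in> S" "\<forall>k>r. coeff f k \<in> S"
  obtains g h where "f = g + h" "g \<in> polys_over S" "degree h \<le> r" "coeff h r = coeff f r"
proof (rule that[of "f - poly_cutoff (Suc r) f" "poly_cutoff (Suc r) f"])
  show "f - poly_cutoff (Suc r) f \<in> polys_over S"
    using assms by (simp add: polys_over_def coeff_poly_cutoff)
  show "degree (poly_cutoff (Suc r) f) \<le> r"
    by (rule degree_le) (simp add: coeff_poly_cutoff)
qed (simp_all add: coeff_poly_cutoff)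

lemma power_add_low_degree:
  fixes A B :: "'a::comm_ring_1 poly"
  assumes A: "degree A \<le> m" and B: "degree B \<le> r" and "r < m" and "n \<ge> 1"
  shows "degree ((A + B) ^ n - A ^ n) \<le> (n - 1) * m + r"
    and "coeff ((A + B) ^ n - A ^ n) ((n - 1) * m + r) = of_nat n * coeff A m ^ (n - 1) * coeff B r"
proof -
  define T where "T = (\<Sum>i<n. (A + B) ^ i * A ^ (n - 1 - i))"
  have diff: "(A + B) ^ n - A ^ n = B * T"
    using diff_power_eq_sum[of "A + B" "n - 1" A] \<open>n \<ge> 1\<close> by (simp add: T_def)
  have AB: "degree (A + B) \<le> m" "coeff (A + B) m = coeff A m"
    using A B \<open>r < m\<close> by (auto intro: degree_add_le simp: coeff_eq_0)
  have term_deg: "degree ((A + B) ^ i * A ^ (n - 1 - i)) \<le> (n - 1) * m" if "i < n" for i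
  proof -
    have "degree ((A + B) ^ i * A ^ (n - 1 - i)) \<le> i * m + (n - 1 - i) * m"
      using degree_mult_le add_le_mono[OF degree_power_le_mult[OF AB(1)] degree_power_le_mult[OF A]]
      by (rule order.trans)
    also have "\<dots> = (n - 1) * m" using that by (simp flip: add_mult_distrib)
    finally show ?thesis .
  qed
  have T_deg: "degree T \<le> (n - 1) * m"
    unfolding T_def by (intro degree_sum_le term_deg) auto
  have "coeff ((A + B) ^ i * A ^ (n - 1 - i)) ((n - 1) * m) = coeff A m ^ (n - 1)" if "i < n" for i
  proof -
    have split: "n - 1 = i + (n - 1 - i)" using that by simp
    have "coeff ((A + B) ^ i * A ^ (n - 1 - i)) (i * m + (n - 1 - i) * m)
        = coeff (A + B) m ^ i * coeff A m ^ (n - 1 - i)"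
      using coeff_mult_at_degree_bounds[OF degree_power_le_mult[OF AB(1)] degree_power_le_mult[OF A]]
      by (simp only: coeff_power_at_degree_bound[OF AB(1)] coeff_power_at_degree_bound[OF A])
    then show ?thesis by (metis split AB(2) add_mult_distrib power_add)
  qed
  then have T_coeff: "coeff T ((n - 1) * m) = of_nat n * coeff A m ^ (n - 1)"
    by (simp add: T_def coeff_sum)
  show "degree ((A + B) ^ n - A ^ n) \<le> (n - 1) * m + r"
    unfolding diff using degree_mult_le[of B T] B T_deg by linarith
  show "coeff ((A + B) ^ n - A ^ n) ((n - 1) * m + r) = of_nat n * coeff A m ^ (n - 1) * coeff B r"
    unfolding diff using coeff_mult_at_degree_bounds[OF B T_deg] T_coeff by (simp add: add.commute mult_ac)
qed

lemma obtain_highest_coeff_notin: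
  assumes "0 \<in> S" "f \<notin> polys_over S"
  obtains r where "coeff f r \<notin> S" "\<forall>k>r. coeff f k \<in> S"
proof -
  have ne: "{k. coeff f k \<notin> S} \<noteq> {}" using assms(2) by (auto simp: polys_over_def)
  have "{k. coeff f k \<notin> S} \<subseteq> {..degree f}" using assms(1) by (auto intro: le_degree)
  then have fin: "finite {k. coeff f k \<notin> S}" by (rule finite_subset) simp
  show ?thesis
    using that Max_in[OF fin ne] Max_ge[OF fin] by (auto simp: not_le[symmetric])
qed

lemma quotient_closed_polys_over:
  fixes S :: "'a::idom set"
  assumes S: "is_subring S" "quotient_closed S"
  shows "quotient_closed (polys_over S)"
  unfolding quotient_closed_def
proof (intro ballI allI impI)
  fix A B :: "'a poly"
  assume A: "A \<in> polys_over S" "A \<noteq> 0" and AB: "A * B \<in> polys_over S"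
  have "0 \<in> S" using S(1) by (simp add: is_subring_def)
  show "B \<in> polys_over S"
  proof (rule ccontr)
    assume "B \<notin> polys_over S"
    with \<open>0 \<in> S\<close> obtain j where j: "coeff B j \<notin> S" "\<forall>k>j. coeff B k \<in> S"
      by (rule obtain_highest_coeff_notin)
    from \<open>0 \<in> S\<close> j(2) obtain Bhi Blo
      where B: "B = Bhi + Blo" "Bhi \<in> polys_over S" "degree Blo \<le> j" "coeff Blo j = coeff B j"
      by (rule polys_over_split)
    have "A * Blo = A * B - A * Bhi" by (simp add: B(1) algebra_simps)
    then have "A * Blo \<in> polys_over S"
      using is_subring_polys_over[OF S(1)] A(1) AB B(2) by (simp add: is_subring_def)
    moreover have "coeff (A * Blo) (degree A + j) = lead_coeff A * coeff B j"
      using coeff_mult_at_degree_bounds[OF order.refl B(3)] B(4) by simp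
    ultimately have "lead_coeff A * coeff B j \<in> S" by (metis polys_over_def mem_Collect_eq)
    moreover have "lead_coeff A \<in> S" using A(1) by (simp add: polys_over_def)
    moreover have "lead_coeff A \<noteq> 0" using A(2) by simp
    ultimately show False using S(2) j(1) unfolding quotient_closed_def by blast
  qed
qed

lemma pcompose_monom: "pcompose (monom c n) q = smult c (q ^ n)"
  by (induction n) (simp_all add: monom_0 monom_Suc pcompose_pCons)

lemma coeff_pcompose_above:
  fixes p Q :: "'a::comm_ring_1 poly"
  assumes "degree Q \<le> m" "(degree p - 1) * m < d"
  shows "coeff (pcompose p Q) d = lead_coeff p * coeff (Q ^ degree p) d"
proof -
  define p' where "p' = p - monom (lead_coeff p) (degree p)"
  have "degree p' \<le> degree p - 1"
    unfolding p'_def by (rule degree_le) (auto simp: coeff_monom coeff_eq_0)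
  then have "degree (pcompose p' Q) \<le> (degree p - 1) * m"
    using degree_pcompose_le[of p' Q] assms(1) by (meson mult_le_mono order_trans)
  then have "coeff (pcompose p' Q) d = 0" using assms(2) by (simp add: coeff_eq_0)
  moreover have "pcompose p Q = smult (lead_coeff p) (Q ^ degree p) + pcompose p' Q"
    by (simp add: p'_def pcompose_diff pcompose_monom)
  ultimately show ?thesis by simp
qed

lemma Max_coeff_notin_eqI:
  assumes "coeff f r \<notin> S" "\<forall>k>r. coeff f k \<in> S"
  shows "Max {k. coeff f k \<notin> S} = r"
proof (rule Max_eqI)
  show "finite {k. coeff f k \<notin> S}"
    by (rule finite_subset[of _ "{..r}"]) (use assms(2) in \<open>auto simp: not_le[symmetric]\<close>)
qed (use assms in \<open>auto simp: not_le[symmetric]\<close>)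

lemma highest_coeff_notin_pcompose:
  fixes S :: "'a::{idom,ring_char_0} set" and p Q :: "'a poly"
  assumes S: "is_subring S" "quotient_closed S"
    and p: "degree p > 0" "lead_coeff p \<in> S"
    and Q: "lead_coeff Q \<in> S" "r \<ge> 1" "coeff Q r \<notin> S" "\<forall>k>r. coeff Q k \<in> S"
  defines "d \<equiv> (degree p - 1) * degree Q + r"
  shows "coeff (pcompose p Q) d \<notin> S" and "\<forall>k>d. coeff (pcompose p Q) k \<in> S"
proof -
  define n m where "n = degree p" and "m = degree Q"
  have "0 \<in> S" and S_diff: "\<And>a b. a \<in> S \<Longrightarrow> b \<in> S \<Longrightarrow> a - b \<in> S"
    and S_mult: "\<And>a b. a \<in> S \<Longrightarrow> b \<in> S \<Longrightarrow> a * b \<in> S"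
    using S(1) by (auto simp: is_subring_def)
  have "r \<le> m" using Q(3) \<open>0 \<in> S\<close> by (auto simp: m_def intro: le_degree)
  moreover have "r \<noteq> m" using Q(1,3) by (auto simp: m_def)
  ultimately have "r < m" by simp
  have "Q \<noteq> 0" using Q(3) \<open>0 \<in> S\<close> by auto
  from \<open>0 \<in> S\<close> Q(4) obtain Qhi Qlo
    where split: "Q = Qhi + Qlo" "Qhi \<in> polys_over S" and Qlo: "degree Qlo \<le> r" "coeff Qlo r = coeff Q r"
    by (rule polys_over_split)
  have "Qhi = Q - Qlo" using split(1) by simp
  then have Qhi: "degree Qhi \<le> m" "coeff Qhi m = lead_coeff Q"
    using Qlo(1) \<open>r < m\<close> by (auto simp: m_def coeff_eq_0 intro!: degree_diff_le)
  have Qhi_pow: "coeff (Qhi ^ n) k \<in> S" for k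
    using split(2) is_subring_power[OF is_subring_polys_over[OF S(1)]] by (simp add: polys_over_def)
  have "n \<ge> 1" using p(1) by (simp add: n_def)
  note perturbation = power_add_low_degree[OF Qhi(1) Qlo(1) \<open>r < m\<close> \<open>n \<ge> 1\<close>, folded split(1)]
  have coeff_P: "coeff (pcompose p Q) k = lead_coeff p * (coeff (Qhi ^ n) k + coeff (Q ^ n - Qhi ^ n) k)"
    if "k \<ge> d" for k
  proof -
    have "(n - 1) * m < k" using that Q(2) by (simp add: d_def n_def m_def)
    then show ?thesis using coeff_pcompose_above[of Q m] by (simp add: m_def n_def)
  qed
  show "\<forall>k>d. coeff (pcompose p Q) k \<in> S"
  proof (intro allI impI)
    fix k assume "k > d"
    then have "coeff (Q ^ n - Qhi ^ n) k = 0"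
      using perturbation(1) by (intro coeff_eq_0) (simp add: d_def n_def m_def)
    then show "coeff (pcompose p Q) k \<in> S" using coeff_P[of k] \<open>k > d\<close> p(2) Qhi_pow S_mult by simp
  qed
  show "coeff (pcompose p Q) d \<notin> S"
  proof
    define c where "c = lead_coeff p * (of_nat n * lead_coeff Q ^ (n - 1))"
    assume "coeff (pcompose p Q) d \<in> S"
    moreover have "coeff (pcompose p Q) d = lead_coeff p * coeff (Qhi ^ n) d + c * coeff Q r"
      using coeff_P[of d] perturbation(2) Qhi(2) Qlo(2)
      by (simp add: c_def d_def n_def m_def algebra_simps)
    ultimately have "c * coeff Q r \<in> S"
      using S_diff S_mult p(2) Qhi_pow by (metis add_diff_cancel_left')
    moreover have "c \<in> S" "c \<noteq> 0"
      using S_mult p Q(1) \<open>Q \<noteq> 0\<close> is_subring_of_nat[OF S(1)] is_subring_power[OF S(1)] \<open>n \<ge> 1\<close>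
      by (auto simp: c_def n_def)
    ultimately show False using S(2) Q(3) unfolding quotient_closed_def by blast
  qed
qed

lemma map_poly_add:
  assumes "f 0 = 0" "\<And>x y. f (x + y) = f x + f y"
  shows "map_poly f (p + q) = map_poly f p + map_poly f q"
  by (intro poly_eqI) (simp add: coeff_map_poly assms)

lemma map_poly_mult:
  fixes f :: "'a::comm_semiring_0 \<Rightarrow> 'b::comm_semiring_0"
  assumes "f 0 = 0" "\<And>x y. f (x + y) = f x + f y" "\<And>x y. f (x * y) = f x * f y"
  shows "map_poly f (p * q) = map_poly f p * map_poly f q"
proof (induction p)
  case (pCons a p)
  have "map_poly f (pCons a p * q) = map_poly f (smult a q) + map_poly f (pCons 0 (p * q))"
    by (simp add: map_poly_add[OF assms(1,2)])
  also have "\<dots> = smult (f a) (map_poly f q) + pCons 0 (map_poly f p * map_poly f q)"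
    by (simp add: map_poly_smult assms map_poly_pCons pCons.IH)
  also have "\<dots> = map_poly f (pCons a p) * map_poly f q"
    by (simp add: map_poly_pCons assms)
  finally show ?case .
qed simp

lemma map_poly_const_add:
  "map_poly (\<lambda>a. [:a:]) (x + y) = map_poly (\<lambda>a. [:a:]) x + map_poly (\<lambda>a. [:a:]) y"
  by (rule map_poly_add) auto

lemma map_poly_const_mult:
  "map_poly (\<lambda>a. [:a:]) (x * y) = map_poly (\<lambda>a. [:a:]) x * map_poly (\<lambda>a. [:a:]) y"
  by (rule map_poly_mult) (auto simp: mult.commute)

text \<open>\<open>h(x,y) \<mapsto> h(t, y t)\<close>, with \<open>t\<close> the outer variable: \<open>bcoeff h i j\<close> becomes the coefficient
  of \<open>y^j t^(i+j)\<close>.\<close>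

definition grading :: "'a::comm_ring_1 poly poly \<Rightarrow> 'a poly poly" where
  "grading h = poly (map_poly (map_poly (\<lambda>a. [:a:])) h) [:0, [:0, 1:]:]"

lemma grading_add: "grading (g + h) = grading g + grading h"
  by (simp add: grading_def map_poly_add map_poly_const_add)

lemma grading_mult: "grading (g * h) = grading g * grading h"
  by (simp add: grading_def map_poly_add map_poly_mult map_poly_const_add map_poly_const_mult)

lemma grading_pCons: "grading (pCons c h) = map_poly (\<lambda>a. [:a:]) c + [:0, [:0, 1:]:] * grading h"
  by (simp add: grading_def map_poly_pCons)

lemma coeff_grading: "coeff (coeff (grading h) k) j = (if j \<le> k then bcoeff h (k - j) j else 0)"
proof (induction h arbitrary: k j)
  case (pCons c h)
  show ?case
    by (cases k; cases j) (auto simp: grading_pCons coeff_map_poly bcoeff_def coeff_pCons pCons.IH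
        Suc_diff_le split: nat.splits)
qed (simp add: grading_def bcoeff_def)

lemma grading_comp_biv: "grading (comp_biv p q) = pcompose (map_poly (\<lambda>c. [:c:]) p) (grading q)"
proof (induction p)
  case (pCons a p)
  have "grading [:[:a:]:] = [:[:a:]:]" by (simp add: grading_def map_poly_pCons)
  with pCons show ?case
    by (simp add: comp_biv_def map_poly_pCons pcompose_pCons grading_add grading_mult)
qed (simp add: comp_biv_def grading_def)

lemma hom_in_Fxy_iff_grading:
  "0 \<in> F \<Longrightarrow> hom_in_Fxy F h k \<longleftrightarrow> coeff (grading h) k \<in> polys_over F"
  unfolding hom_in_Fxy_def polys_over_def
  by (auto simp: coeff_grading) (metis add_diff_cancel_right' le_add2)

lemma in_Fxy_iff_hom_in_Fxy: "in_Fxy F h \<longleftrightarrow> (\<forall>k. hom_in_Fxy F h k)"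
  by (auto simp: in_Fxy_def hom_in_Fxy_def)

lemma tdeg_grading:
  assumes "grading h \<noteq> 0"
  shows "tdeg h = degree (grading h)"
proof -
  have "{i + j | i j. bcoeff h i j \<noteq> 0} = {k. coeff (grading h) k \<noteq> 0}"
  proof (intro set_eqI iffI)
    fix k assume "k \<in> {i + j | i j. bcoeff h i j \<noteq> 0}"
    then obtain i j where "k = i + j" "bcoeff h i j \<noteq> 0" by auto
    then have "coeff (coeff (grading h) k) j \<noteq> 0" by (simp add: coeff_grading)
    then show "k \<in> {k. coeff (grading h) k \<noteq> 0}" by auto
  next
    fix k assume "k \<in> {k. coeff (grading h) k \<noteq> 0}"
    then have "lead_coeff (coeff (grading h) k) \<noteq> 0" by simp
    then obtain j where "coeff (coeff (grading h) k) j \<noteq> 0" by blast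
    then have "j \<le> k" "bcoeff h (k - j) j \<noteq> 0" by (auto simp: coeff_grading split: if_splits)
    then show "k \<in> {i + j | i j. bcoeff h i j \<noteq> 0}"
      by (intro CollectI exI[of _ "k - j"] exI[of _ j]) simp
  qed
  moreover have "Max {k. coeff (grading h) k \<noteq> 0} = degree (grading h)"
  proof (rule Max_eqI)
    show "finite {k. coeff (grading h) k \<noteq> 0}"
      by (rule finite_subset[of _ "{..degree (grading h)}"]) (auto intro: le_degree)
  qed (use assms in \<open>auto intro: le_degree\<close>)
  ultimately show ?thesis by (simp add: tdeg_def)
qed

lemma D_F_grading:
  assumes "0 \<in> F" "coeff (grading h) r \<notin> polys_over F" "\<forall>k>r. coeff (grading h) k \<in> polys_over F"
  shows "\<not> in_Fxy F h" and "D_F F h = degree (grading h) - r"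
proof -
  have hom: "hom_in_Fxy F h k \<longleftrightarrow> coeff (grading h) k \<in> polys_over F" for k
    using assms(1) by (rule hom_in_Fxy_iff_grading)
  show "\<not> in_Fxy F h" using assms(2) hom in_Fxy_iff_hom_in_Fxy by blast
  moreover have "grading h \<noteq> 0" using assms(1,2) by (auto simp: polys_over_def)
  moreover have "Max {k. \<not> hom_in_Fxy F h k} = r"
    unfolding hom using assms(2,3) by (rule Max_coeff_notin_eqI)
  ultimately show "D_F F h = degree (grading h) - r" by (simp add: D_F_def tdeg_grading)
qed

lemma obtain_highest_component_notin_Fxy:
  assumes "0 \<in> F" "\<not> in_Fxy F q" "hom_in_Fxy F q (tdeg q)" "\<exists>j\<ge>1. \<not> hom_in_Fxy F q j"
  obtains r where "r \<ge> 1" "lead_coeff (grading q) \<in> polys_over F"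
    "coeff (grading q) r \<notin> polys_over F" "\<forall>k>r. coeff (grading q) k \<in> polys_over F"
proof -
  have hom: "hom_in_Fxy F q k \<longleftrightarrow> coeff (grading q) k \<in> polys_over F" for k
    using assms(1) by (rule hom_in_Fxy_iff_grading)
  have "0 \<in> polys_over F" using assms(1) by (simp add: polys_over_def)
  moreover have "grading q \<notin> polys_over (polys_over F)"
    using assms(2) hom by (auto simp: in_Fxy_iff_hom_in_Fxy polys_over_def)
  ultimately obtain r
    where r: "coeff (grading q) r \<notin> polys_over F" "\<forall>k>r. coeff (grading q) k \<in> polys_over F"
    by (rule obtain_highest_coeff_notin)
  obtain j where "j \<ge> 1" "coeff (grading q) j \<notin> polys_over F" using assms(4) hom by blast
  with r(2) have "r \<ge> 1" by (meson le_trans not_le)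
  moreover have "grading q \<noteq> 0" using r(1) \<open>0 \<in> polys_over F\<close> by auto
  then have "lead_coeff (grading q) \<in> polys_over F" using assms(3) by (simp add: hom tdeg_grading)
  ultimately show ?thesis using r that by blast
qed

theorem theorem24:
  fixes F :: "'a::field_char_0 set" and p :: "'a poly" and q :: "'a poly poly"
  assumes "is_subfield F" and "F \<noteq> UNIV"
    and "degree p > 0" and "lead_coeff p \<in> F"
    and "\<not> in_Fxy F q"
    and "hom_in_Fxy F q (tdeg q)"
    and "\<exists>j\<ge>1. \<not> hom_in_Fxy F q j"
  shows "\<not> in_Fxy F (comp_biv p q) \<and> D_F F (comp_biv p q) = D_F F q"
proof -
  define Q where "Q = grading q"
  define p' where "p' = map_poly (\<lambda>c. [:c:]) p"
  have "0 \<in> F" using assms(1) by (simp add: is_subfield_def)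
  have F: "is_subring F" "quotient_closed F"
    using assms(1) by (simp_all add: is_subfield_imp_is_subring is_subfield_imp_quotient_closed)
  note S = is_subring_polys_over[OF F(1)] quotient_closed_polys_over[OF F]
  obtain r where r: "r \<ge> 1" "lead_coeff Q \<in> polys_over F"
    "coeff Q r \<notin> polys_over F" "\<forall>k>r. coeff Q k \<in> polys_over F"
    using \<open>0 \<in> F\<close> assms(5-7) unfolding Q_def by (rule obtain_highest_component_notin_Fxy)
  have p': "degree p' = degree p" "lead_coeff p' \<in> polys_over F"
    using assms(4) \<open>0 \<in> F\<close>
    by (auto simp: p'_def degree_map_poly coeff_map_poly polys_over_def coeff_pCons split: nat.split)
  with assms(3) have "degree p' > 0" by simp
  note P = highest_coeff_notin_pcompose[OF S this p'(2) r(2,1,3,4), unfolded p'(1)]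
  have "grading (comp_biv p q) = pcompose p' Q" by (simp add: grading_comp_biv p'_def Q_def)
  note D_comp = D_F_grading[OF \<open>0 \<in> F\<close>, of "comp_biv p q", unfolded this, OF P]
  note D_q = D_F_grading[OF \<open>0 \<in> F\<close>, of q r, folded Q_def, OF r(3,4)]
  have "D_F F (comp_biv p q) = degree p * degree Q - ((degree p - 1) * degree Q + r)"
    using D_comp(2) by (simp add: degree_pcompose p'(1))
  also have "\<dots> = degree Q - r"
    using assms(3) by (cases "degree p") auto
  finally show ?thesis using D_comp(1) D_q(2) by simp
qed

end
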